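(* Let $G$ be a graph. Then (i) $\mathrm{gp}(G)\le 2\,\mathrm{ip}(G)$; and (ii) if $V(G)$ can be covered by isometric cycles of $G$, then $\mathrm{gp}(G)\le 3\,\mathrm{ic}(G)$.
   Context: All graphs are finite, simple and connected. A subgraph $H$ of $G$ is isometric if $d_H(x,y)=d_G(x,y)$ for all $x,y\in V(H)$. The isometric-path number $\mathrm{ip}(G)$ is the minimum number of isometric paths (geodesics) of $G$ whose vertex sets cover $V(G)$. The isometric-cycle number $\mathrm{ic}(G)$ is the minimum number of isometric cycles of $G$ whose vertex sets cover $V(G)$. A set $S$ of vertices is a general position set if no three vertices of $S$ lie on a common geodesic of $G$; $\mathrm{gp}(G)$ is the maximum cardinality of a general position set of $G$. *)

theory Defs
  imports Main
begin

definition simple_graph :: "'a set \<Rightarrow> ('a \<Rightarrow> 'a \<Rightarrow> bool) \<Rightarrow> bool" where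
  "simple_graph V E \<longleftrightarrow> finite V \<and> (\<forall>u v. E u v \<longrightarrow> u \<in> V \<and> v \<in> V)
     \<and> (\<forall>u v. E u v \<longrightarrow> E v u) \<and> (\<forall>u. \<not> E u u)"

definition walk :: "'a set \<Rightarrow> ('a \<Rightarrow> 'a \<Rightarrow> bool) \<Rightarrow> 'a list \<Rightarrow> bool" where
  "walk V E xs \<longleftrightarrow> xs \<noteq> [] \<and> set xs \<subseteq> V \<and>
     (\<forall>i. i + 1 < length xs \<longrightarrow> E (xs ! i) (xs ! (i + 1)))"

definition connected_graph :: "'a set \<Rightarrow> ('a \<Rightarrow> 'a \<Rightarrow> bool) \<Rightarrow> bool" where
  "connected_graph V E \<longleftrightarrow> simple_graph V E \<and> V \<noteq> {} \<and>
     (\<forall>x\<in>V. \<forall>y\<in>V. \<exists>xs. walk V E xs \<and> hd xs = x \<and> last xs = y)"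

definition dist :: "'a set \<Rightarrow> ('a \<Rightarrow> 'a \<Rightarrow> bool) \<Rightarrow> 'a \<Rightarrow> 'a \<Rightarrow> nat" where
  "dist V E x y = (LEAST n. \<exists>xs. walk V E xs \<and> hd xs = x \<and> last xs = y \<and> length xs = n + 1)"

definition path_edges :: "'a list \<Rightarrow> 'a \<Rightarrow> 'a \<Rightarrow> bool" where
  "path_edges xs u v \<longleftrightarrow> (\<exists>i. i + 1 < length xs \<and>
     ((u = xs ! i \<and> v = xs ! (i + 1)) \<or> (v = xs ! i \<and> u = xs ! (i + 1))))"

definition cycle_edges :: "'a list \<Rightarrow> 'a \<Rightarrow> 'a \<Rightarrow> bool" where
  "cycle_edges xs u v \<longleftrightarrow> (\<exists>i < length xs.
     (u = xs ! i \<and> v = xs ! ((i + 1) mod length xs)) \<or>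
     (v = xs ! i \<and> u = xs ! ((i + 1) mod length xs)))"

definition isometric_path :: "'a set \<Rightarrow> ('a \<Rightarrow> 'a \<Rightarrow> bool) \<Rightarrow> 'a list \<Rightarrow> bool" where
  "isometric_path V E xs \<longleftrightarrow> walk V E xs \<and> distinct xs \<and>
     (\<forall>x\<in>set xs. \<forall>y\<in>set xs. dist (set xs) (path_edges xs) x y = dist V E x y)"

definition isometric_cycle :: "'a set \<Rightarrow> ('a \<Rightarrow> 'a \<Rightarrow> bool) \<Rightarrow> 'a list \<Rightarrow> bool" where
  "isometric_cycle V E xs \<longleftrightarrow> length xs \<ge> 3 \<and> distinct xs \<and> set xs \<subseteq> V \<and>
     (\<forall>i < length xs. E (xs ! i) (xs ! ((i + 1) mod length xs))) \<and>
     (\<forall>x\<in>set xs. \<forall>y\<in>set xs. dist (set xs) (cycle_edges xs) x y = dist V E x y)"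

definition ip :: "'a set \<Rightarrow> ('a \<Rightarrow> 'a \<Rightarrow> bool) \<Rightarrow> nat" where
  "ip V E = (LEAST k. \<exists>P. finite P \<and> card P = k \<and> (\<forall>p\<in>P. isometric_path V E p)
                         \<and> (\<Union>p\<in>P. set p) = V)"

definition ic :: "'a set \<Rightarrow> ('a \<Rightarrow> 'a \<Rightarrow> bool) \<Rightarrow> nat" where
  "ic V E = (LEAST k. \<exists>C. finite C \<and> card C = k \<and> (\<forall>c\<in>C. isometric_cycle V E c)
                         \<and> (\<Union>c\<in>C. set c) = V)"

definition general_position :: "'a set \<Rightarrow> ('a \<Rightarrow> 'a \<Rightarrow> bool) \<Rightarrow> 'a set \<Rightarrow> bool" where
  "general_position V E S \<longleftrightarrow> S \<subseteq> V \<and>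
     (\<forall>u\<in>S. \<forall>v\<in>S. \<forall>w\<in>S. u \<noteq> v \<and> u \<noteq> w \<and> v \<noteq> w \<longrightarrow>
        \<not> (\<exists>p. isometric_path V E p \<and> {u, v, w} \<subseteq> set p))"

definition gp :: "'a set \<Rightarrow> ('a \<Rightarrow> 'a \<Rightarrow> bool) \<Rightarrow> nat" where
  "gp V E = Max (card ` {S. general_position V E S})"

end

theory Submission
  imports Defs
begin

text \<open>A general position set meets an isometric path in at most two vertices. On an isometric
cycle of length \<open>n\<close>, among any four vertices three lie on an arc of length at most \<open>n/2\<close>;
arcs of a cycle graph of length at most \<open>n/2\<close> are geodesics of the cycle, hence of \<open>G\<close>, so these
three vertices lie on an isometric path of \<open>G\<close>. So a general position set meets an isometric
cycle in at most three vertices, and counting over a minimum cover gives both bounds.\<close>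

section \<open>Walks and distances\<close>

lemma successively_take: "successively P xs \<Longrightarrow> successively P (take n xs)"
  by (metis append_take_drop_id successively_append_iff)

lemma successively_drop: "successively P xs \<Longrightarrow> successively P (drop n xs)"
  by (metis append_take_drop_id successively_append_iff)

lemma hd_last_append_tl:
  "xs \<noteq> [] \<Longrightarrow> ys \<noteq> [] \<Longrightarrow> last xs = hd ys \<Longrightarrow> hd (xs @ tl ys) = hd xs \<and> last (xs @ tl ys) = last ys"
  by (cases ys) auto

lemma walk_iff_successively: "walk V E xs \<longleftrightarrow> xs \<noteq> [] \<and> set xs \<subseteq> V \<and> successively E xs"
  unfolding walk_def successively_conv_nth by simp

lemma dist_le_walk_length:
  assumes "walk V E xs" "hd xs = x" "last xs = y"
  shows "dist V E x y \<le> length xs - 1"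
  unfolding dist_def using assms by (intro Least_le) (auto simp: walk_def)

lemma shortest_walk_exists:
  assumes "walk V E xs" "hd xs = x" "last xs = y"
  obtains ys where "walk V E ys" "hd ys = x" "last ys = y" "length ys = dist V E x y + 1"
proof -
  have "\<exists>n ys. walk V E ys \<and> hd ys = x \<and> last ys = y \<and> length ys = n + 1"
    using assms by (intro exI[of _ "length xs - 1"] exI[of _ xs]) (auto simp: walk_def)
  then have "\<exists>ys. walk V E ys \<and> hd ys = x \<and> last ys = y \<and> length ys = dist V E x y + 1"
    unfolding dist_def by (rule LeastI_ex)
  then show thesis using that by blast
qed

lemma dist_self: "x \<in> V \<Longrightarrow> dist V E x x = 0"
  using dist_le_walk_length[of V E "[x]" x x] by (simp add: walk_def)

lemma walk_append_tl:
  assumes "walk V E xs" "walk V E ys" "last xs = hd ys"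
  shows "walk V E (xs @ tl ys)"
proof -
  obtain y ys' where ys: "ys = y # ys'" using assms(2) by (cases ys) (auto simp: walk_def)
  then show ?thesis
    using assms by (auto simp: walk_iff_successively successively_append_iff successively_Cons)
qed

lemma walk_rev:
  assumes "\<forall>u v. E u v \<longrightarrow> E v u" "walk V E xs"
  shows "walk V E (rev xs)"
  using assms unfolding walk_iff_successively by (auto intro: successively_mono)

lemma walk_take_drop:
  assumes "walk V E xs" "i \<le> j" "j < length xs"
  shows "walk V E (take (j + 1 - i) (drop i xs))"
proof -
  have "successively E (take (j + 1 - i) (drop i xs))"
    using assms(1) by (simp add: walk_iff_successively successively_take successively_drop)
  moreover have "set (take (j + 1 - i) (drop i xs)) \<subseteq> set xs"
    by (meson set_drop_subset set_take_subset subset_trans)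
  ultimately show ?thesis using assms by (auto simp: walk_iff_successively)
qed

lemma walk_between_nth:
  assumes "walk V E xs" "i \<le> j" "j < length xs"
  obtains ys where "walk V E ys" "hd ys = xs ! i" "last ys = xs ! j" "length ys = j + 1 - i"
  using walk_take_drop[OF assms] assms that
  by (simp add: hd_drop_conv_nth last_conv_nth nth_take)

lemma dist_nth_le:
  assumes "walk V E xs" "i \<le> j" "j < length xs"
  shows "dist V E (xs ! i) (xs ! j) \<le> j - i"
proof -
  obtain ys where "walk V E ys" "hd ys = xs ! i" "last ys = xs ! j" "length ys = j + 1 - i"
    using walk_between_nth[OF assms] .
  then show ?thesis using dist_le_walk_length[of V E ys] assms(2) by simp
qed

lemma walk_subgraph_dist_le:
  assumes "\<And>ys. walk V' E' ys \<Longrightarrow> walk V E ys" "walk V' E' xs" "hd xs = x" "last xs = y"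
  shows "dist V E x y \<le> dist V' E' x y"
proof -
  obtain ys where "walk V' E' ys" "hd ys = x" "last ys = y" "length ys = dist V' E' x y + 1"
    using shortest_walk_exists[OF assms(2-4)] .
  then show ?thesis using dist_le_walk_length[OF assms(1)] by fastforce
qed

lemma dist_commute_le:
  assumes "\<forall>u v. E u v \<longrightarrow> E v u" "walk V E xs" "hd xs = x" "last xs = y"
  shows "dist V E y x \<le> dist V E x y"
proof -
  obtain ys where ys: "walk V E ys" "hd ys = x" "last ys = y" "length ys = dist V E x y + 1"
    using shortest_walk_exists[OF assms(2-4)] .
  then have "ys \<noteq> []" by (simp add: walk_def)
  then show ?thesis
    using dist_le_walk_length[OF walk_rev[OF assms(1) ys(1)]] ys by (simp add: hd_rev last_rev)
qed

lemma dist_commute: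
  assumes "\<forall>u v. E u v \<longrightarrow> E v u" "walk V E xs" "hd xs = x" "last xs = y"
  shows "dist V E x y = dist V E y x"
proof -
  have "xs \<noteq> []" using assms(2) by (simp add: walk_def)
  then have "hd (rev xs) = y" "last (rev xs) = x" using assms(3,4) by (simp_all add: hd_rev last_rev)
  then have "dist V E x y \<le> dist V E y x"
    by (rule dist_commute_le[OF assms(1) walk_rev[OF assms(1,2)]])
  then show ?thesis using dist_commute_le[OF assms] by simp
qed

lemma connected_graph_sym: "connected_graph V E \<Longrightarrow> \<forall>u v. E u v \<longrightarrow> E v u"
  unfolding connected_graph_def simple_graph_def by blast

lemma connected_graph_shortest_walk:
  assumes "connected_graph V E" "x \<in> V" "y \<in> V"
  obtains ys where "walk V E ys" "hd ys = x" "last ys = y" "length ys = dist V E x y + 1"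
  using assms shortest_walk_exists unfolding connected_graph_def by metis

lemma connected_graph_dist_commute:
  assumes "connected_graph V E" "x \<in> V" "y \<in> V"
  shows "dist V E x y = dist V E y x"
  using connected_graph_shortest_walk[OF assms] dist_commute[OF connected_graph_sym[OF assms(1)]]
  by metis

lemma dist_triangle:
  assumes "connected_graph V E" "x \<in> V" "y \<in> V" "z \<in> V"
  shows "dist V E x z \<le> dist V E x y + dist V E y z"
proof -
  obtain as where a: "walk V E as" "hd as = x" "last as = y" "length as = dist V E x y + 1"
    using connected_graph_shortest_walk[OF assms(1-3)] .
  obtain bs where b: "walk V E bs" "hd bs = y" "last bs = z" "length bs = dist V E y z + 1"
    using connected_graph_shortest_walk[OF assms(1,3,4)] .
  have "as \<noteq> []" "bs \<noteq> []" using a(1) b(1) by (simp_all add: walk_def)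
  then show ?thesis
    using dist_le_walk_length[OF walk_append_tl[OF a(1) b(1)]] hd_last_append_tl[of as bs] a b
    by simp
qed

lemma dist_nth_shortest_walk:
  assumes cg: "connected_graph V E" and w: "walk V E xs"
    and len: "length xs = dist V E (hd xs) (last xs) + 1" and ij: "i \<le> j" "j < length xs"
  shows "dist V E (xs ! i) (xs ! j) = j - i"
proof -
  define m where "m = length xs - 1"
  have "xs \<noteq> []" using w by (simp add: walk_def)
  then have m: "m < length xs" "j \<le> m" "hd xs = xs ! 0" "last xs = xs ! m"
    using ij by (auto simp: m_def hd_conv_nth last_conv_nth)
  have inV: "xs ! k \<in> V" if "k \<le> m" for k
    using w nth_mem[of k xs] that m(1) by (auto simp: walk_def)
  have "m = dist V E (xs ! 0) (xs ! m)" using len m m_def by simp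
  also have "\<dots> \<le> dist V E (xs ! 0) (xs ! i) + dist V E (xs ! i) (xs ! j) + dist V E (xs ! j) (xs ! m)"
    using dist_triangle[OF cg inV[of 0] inV[of i] inV[of m]]
      dist_triangle[OF cg inV[of i] inV[of j] inV[of m]] ij m by simp
  also have "\<dots> \<le> i + dist V E (xs ! i) (xs ! j) + (m - j)"
    using dist_nth_le[OF w, of 0 i] dist_nth_le[OF w, of j m] ij m by simp
  finally show ?thesis using dist_nth_le[OF w ij] ij m by linarith
qed

lemma walk_path_edges:
  assumes "\<forall>u v. E u v \<longrightarrow> E v u" "walk V E xs" "walk (set xs) (path_edges xs) ys"
  shows "walk V E ys"
proof -
  have "\<And>u v. path_edges xs u v \<Longrightarrow> E u v"
    using assms(1,2) unfolding path_edges_def walk_def by metis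
  then show ?thesis using assms(2,3) unfolding walk_def by blast
qed

lemma walk_path_edges_self: "walk V E xs \<Longrightarrow> walk (set xs) (path_edges xs) xs"
  unfolding walk_def path_edges_def by blast

lemma shortest_walk_distinct:
  assumes cg: "connected_graph V E" and w: "walk V E xs"
    and len: "length xs = dist V E (hd xs) (last xs) + 1"
  shows "distinct xs"
  unfolding distinct_conv_nth
proof (intro allI impI)
  have "xs ! i \<noteq> xs ! j" if ij: "i < j" "j < length xs" for i j
  proof -
    have "xs ! i \<in> V" using w nth_mem[of i xs] ij by (auto simp: walk_def)
    then show ?thesis using dist_nth_shortest_walk[OF cg w len, of i j] dist_self[of _ V E] ij by auto
  qed
  then show "xs ! i \<noteq> xs ! j" if "i < length xs" "j < length xs" "i \<noteq> j" for i j
    using that by (metis linorder_neqE_nat)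
qed

lemma shortest_walk_isometric_path:
  assumes cg: "connected_graph V E" and w: "walk V E xs"
    and len: "length xs = dist V E (hd xs) (last xs) + 1"
  shows "isometric_path V E xs"
proof -
  let ?D = "dist (set xs) (path_edges xs)"
  have ws: "walk (set xs) (path_edges xs) xs" using walk_path_edges_self[OF w] .
  have sym: "\<forall>u v. path_edges xs u v \<longrightarrow> path_edges xs v u" unfolding path_edges_def by blast
  have inV: "xs ! i \<in> V" if "i < length xs" for i using w that nth_mem by (auto simp: walk_def)
  have ordered: "?D (xs ! i) (xs ! j) = dist V E (xs ! i) (xs ! j)" if ij: "i \<le> j" "j < length xs" for i j
  proof -
    obtain ys where "walk (set xs) (path_edges xs) ys" "hd ys = xs ! i" "last ys = xs ! j"
      using walk_between_nth[OF ws ij] .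
    then have "dist V E (xs ! i) (xs ! j) \<le> ?D (xs ! i) (xs ! j)"
      using walk_subgraph_dist_le walk_path_edges[OF connected_graph_sym[OF cg] w] by metis
    then show ?thesis using dist_nth_le[OF ws ij] dist_nth_shortest_walk[OF cg w len ij] by simp
  qed
  have "?D x y = dist V E x y" if xy: "x \<in> set xs" "y \<in> set xs" for x y
  proof -
    obtain i j where i: "i < length xs" "x = xs ! i" and j: "j < length xs" "y = xs ! j"
      using xy by (auto simp: in_set_conv_nth)
    show ?thesis
    proof (cases "i \<le> j")
      case True
      then show ?thesis using ordered i j by simp
    next
      case False
      obtain ys where "walk (set xs) (path_edges xs) ys" "hd ys = y" "last ys = x"
        using walk_between_nth[OF ws _ i(1), of j] False i j by auto
      then have "?D x y = ?D y x" using dist_commute[OF sym] by metis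
      also have "\<dots> = dist V E y x" using ordered[of j i] False i j by simp
      finally show ?thesis using connected_graph_dist_commute[OF cg inV[OF i(1)] inV[OF j(1)]] i j
        by simp
    qed
  qed
  then show ?thesis using w shortest_walk_distinct[OF cg w len] unfolding isometric_path_def by blast
qed

lemma isometric_path_through:
  assumes cg: "connected_graph V E" and V: "a \<in> V" "b \<in> V" "d \<in> V"
    and geodesic: "dist V E a b + dist V E b d = dist V E a d"
  shows "\<exists>P. isometric_path V E P \<and> {a, b, d} \<subseteq> set P"
proof -
  obtain w1 where w1: "walk V E w1" "hd w1 = a" "last w1 = b" "length w1 = dist V E a b + 1"
    using connected_graph_shortest_walk[OF cg V(1,2)] .
  obtain w2 where w2: "walk V E w2" "hd w2 = b" "last w2 = d" "length w2 = dist V E b d + 1"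
    using connected_graph_shortest_walk[OF cg V(2,3)] .
  have ne: "w1 \<noteq> []" "w2 \<noteq> []" using w1(1) w2(1) by (simp_all add: walk_def)
  let ?P = "w1 @ tl w2"
  have ends: "hd ?P = a" "last ?P = d" using hd_last_append_tl[OF ne] w1 w2 by simp_all
  moreover have "length ?P = dist V E a d + 1" using w1(4) w2(4) geodesic ne by simp
  ultimately have "isometric_path V E ?P"
    using shortest_walk_isometric_path[OF cg walk_append_tl[OF w1(1) w2(1)]] w1(3) w2(2) by simp
  moreover have "{a, b, d} \<subseteq> set ?P"
    using ends ne w1(3) hd_in_set[of ?P] last_in_set[of ?P] last_in_set[of w1] by auto
  ultimately show ?thesis by blast
qed

lemma singleton_isometric_path: "v \<in> V \<Longrightarrow> isometric_path V E [v]"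
  using dist_self[of v "{v}"] dist_self[of v V] by (simp add: isometric_path_def walk_def)

section \<open>Distances on a cycle\<close>

lemma cycle_arc_walk:
  assumes "i < length c"
  obtains ys where "walk (set c) (cycle_edges c) ys" "hd ys = c ! i"
    "last ys = c ! ((i + k) mod length c)" "length ys = k + 1"
proof -
  let ?n = "length c"
  let ?ys = "map (\<lambda>t. c ! ((i + t) mod ?n)) [0..<k+1]"
  have n: "0 < ?n" using assms by linarith
  have "cycle_edges c (?ys ! t) (?ys ! (t + 1))" if "t + 1 < length ?ys" for t
  proof -
    have "?ys ! t = c ! ((i + t) mod ?n)" "?ys ! (t + 1) = c ! (((i + t) mod ?n + 1) mod ?n)"
      using that by (simp_all add: mod_Suc_eq del: upt_Suc)
    moreover have "(i + t) mod ?n < ?n" using n by simp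
    ultimately show ?thesis unfolding cycle_edges_def by blast
  qed
  moreover have "set ?ys \<subseteq> set c" using n by auto
  ultimately have "walk (set c) (cycle_edges c) ?ys" unfolding walk_def by simp
  then show thesis using that assms by (simp add: hd_map last_map del: upt_Suc)
qed

lemma dist_cycle_arc_le:
  assumes "i < length c"
  shows "dist (set c) (cycle_edges c) (c ! i) (c ! ((i + k) mod length c)) \<le> k"
  using cycle_arc_walk[OF assms] dist_le_walk_length by (metis diff_add_inverse2)

lemma cycle_edges_nth_cases:
  assumes "distinct c" "i < length c" "i' < length c" "cycle_edges c (c ! i) (c ! i')"
  shows "i' = (i + 1) mod length c \<or> i = (i' + 1) mod length c"
proof -
  obtain a where a: "a < length c" "(c ! i = c ! a \<and> c ! i' = c ! ((a + 1) mod length c)) \<or>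
     (c ! i' = c ! a \<and> c ! i = c ! ((a + 1) mod length c))"
    using assms(4) unfolding cycle_edges_def by blast
  have "(a + 1) mod length c < length c" using a(1) by (intro mod_less_divisor) linarith
  then show ?thesis using a nth_eq_iff_index_eq[OF assms(1)] assms(2,3) by metis
qed

lemma cycle_edge_lift:
  assumes "distinct c" "i < length c" "i' < length c" "cycle_edges c (c ! i) (c ! i')"
    and p: "p mod int (length c) = int i"
  shows "\<exists>p'. p' mod int (length c) = int i' \<and> \<bar>p' - p\<bar> \<le> 1"
  using cycle_edges_nth_cases[OF assms(1-4)]
proof
  assume "i' = (i + 1) mod length c"
  then have "(p + 1) mod int (length c) = int i'"
    using p by (metis mod_add_left_eq of_nat_1 of_nat_add of_nat_mod)
  then show ?thesis by (intro exI[of _ "p + 1"]) simp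
next
  assume "i = (i' + 1) mod length c"
  then have "(p - 1) mod int (length c) = ((int i' + 1) mod int (length c) - 1) mod int (length c)"
    using p by (metis mod_diff_left_eq of_nat_1 of_nat_add of_nat_mod)
  also have "\<dots> = int i'" using assms(3) by (simp add: mod_diff_left_eq)
  finally show ?thesis by (intro exI[of _ "p - 1"]) simp
qed

text \<open>Lower bounds on cycle distances come from lifting walks to the integers, the universal
cover of the cycle: each edge moves the lifted index by at most one.\<close>

lemma cycle_walk_lift:
  assumes "distinct c" "walk (set c) (cycle_edges c) ys" "hd ys = c ! i" "last ys = c ! j"
    "i < length c" "j < length c" "p mod int (length c) = int i"
  shows "\<exists>q. q mod int (length c) = int j \<and> \<bar>q - p\<bar> \<le> int (length ys) - 1"
  using assms(2-)
proof (induction ys arbitrary: i p)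
  case Nil
  then show ?case by (simp add: walk_def)
next
  case (Cons y ys)
  show ?case
  proof (cases "ys = []")
    case True
    then have "i = j" using Cons.prems nth_eq_iff_index_eq[OF assms(1)] by simp
    then show ?thesis using Cons.prems by (intro exI[of _ p]) simp
  next
    case False
    have wys: "walk (set c) (cycle_edges c) ys" and e: "cycle_edges c y (hd ys)"
      using Cons.prems(1) False by (auto simp: walk_iff_successively successively_Cons)
    have "hd ys \<in> set c" using wys False hd_in_set[of ys] by (auto simp: walk_def)
    then obtain i' where i': "i' < length c" "hd ys = c ! i'" by (auto simp: in_set_conv_nth)
    obtain p' where p': "p' mod int (length c) = int i'" "\<bar>p' - p\<bar> \<le> 1"
      using cycle_edge_lift[OF assms(1) Cons.prems(4) i'(1)] e i'(2) Cons.prems by auto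
    obtain q where "q mod int (length c) = int j" "\<bar>q - p'\<bar> \<le> int (length ys) - 1"
      using Cons.IH[OF wys i'(2) _ i'(1) Cons.prems(5) p'(1)] Cons.prems(3) False by auto
    then show ?thesis using p' by (intro exI[of _ q]) auto
  qed
qed

lemma int_mod_le_abs:
  fixes m n :: int
  assumes "0 < n" "2 * (m mod n) \<le> n"
  shows "m mod n \<le> \<bar>m\<bar>"
proof (cases "0 \<le> m")
  case True
  then show ?thesis using zmod_le_nonneg_dividend by simp
next
  case False
  have "m div n < 0" using False assms(1) by (simp add: div_neg_pos_less0)
  then have "n * (m div n) \<le> n * (-1)" using assms(1) by (intro mult_left_mono) auto
  moreover have "m = n * (m div n) + m mod n" by simp
  ultimately show ?thesis using False assms(2) by linarith
qed

lemma dist_cycle_arc: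
  assumes dc: "distinct c" and i: "i < length c" and l: "2 * l \<le> length c"
  shows "dist (set c) (cycle_edges c) (c ! i) (c ! ((i + l) mod length c)) = l"
proof -
  let ?n = "length c" and ?j = "(i + l) mod length c"
  obtain zs where "walk (set c) (cycle_edges c) zs" "hd zs = c ! i" "last zs = c ! ?j"
    using cycle_arc_walk[OF i, of l] .
  then obtain ys where ys: "walk (set c) (cycle_edges c) ys" "hd ys = c ! i" "last ys = c ! ?j"
    "length ys = dist (set c) (cycle_edges c) (c ! i) (c ! ?j) + 1"
    by (rule shortest_walk_exists)
  have j: "?j < ?n" using i by (intro mod_less_divisor) linarith
  have "int i mod int ?n = int i" using i by simp
  then obtain q where q: "q mod int ?n = int ?j" "\<bar>q - int i\<bar> \<le> int (length ys) - 1"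
    using cycle_walk_lift[OF dc ys(1-3) i j] by blast
  have "(q - int i) mod int ?n = (int i + int l - int i) mod int ?n"
    using q(1) by (metis mod_diff_left_eq of_nat_add of_nat_mod)
  also have "\<dots> = int l" using l i by simp
  finally have "int l \<le> \<bar>q - int i\<bar>" using int_mod_le_abs[of "int ?n" "q - int i"] l i by linarith
  then show ?thesis using q(2) ys(4) dist_cycle_arc_le[OF i, of l] by linarith
qed

lemma isometric_cycle_short_arc:
  assumes cg: "connected_graph V E" and ic: "isometric_cycle V E c" and p: "p < length c"
    and short: "2 * (l1 + l2) \<le> length c"
  shows "\<exists>P. isometric_path V E P \<and>
    {c ! p, c ! ((p + l1) mod length c), c ! ((p + l1 + l2) mod length c)} \<subseteq> set P"
proof -
  let ?n = "length c" and ?D = "dist (set c) (cycle_edges c)"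
  define a b d where "a = c ! p" and "b = c ! ((p + l1) mod ?n)" and "d = c ! ((p + l1 + l2) mod ?n)"
  have dc: "distinct c" and sc: "set c \<subseteq> V"
    and iso: "\<forall>x\<in>set c. \<forall>y\<in>set c. ?D x y = dist V E x y"
    using ic unfolding isometric_cycle_def by blast+
  have n: "0 < ?n" using p by linarith
  then have q: "(p + l1) mod ?n < ?n" by simp
  have abd: "a \<in> set c" "b \<in> set c" "d \<in> set c" unfolding a_def b_def d_def using p n by simp_all
  have "?D a b = l1" unfolding a_def b_def using dist_cycle_arc[OF dc p, of l1] short by simp
  moreover have "?D b d = l2"
    unfolding b_def d_def using dist_cycle_arc[OF dc q, of l2] short by (simp add: mod_add_left_eq)
  moreover have "?D a d = l1 + l2"
    unfolding a_def d_def using dist_cycle_arc[OF dc p, of "l1 + l2"] short by (simp add: add.assoc)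
  ultimately have "dist V E a b + dist V E b d = dist V E a d" using iso abd by metis
  then show ?thesis
    using isometric_path_through[OF cg] abd sc unfolding a_def b_def d_def by blast
qed

section \<open>General position sets\<close>

lemma card_inter_isometric_path_le:
  assumes "general_position V E S" "isometric_path V E p"
  shows "card (S \<inter> set p) \<le> 2"
proof (rule ccontr)
  assume "\<not> ?thesis"
  then have "3 \<le> card (S \<inter> set p)" by simp
  then obtain T where "T \<subseteq> S \<inter> set p" "card T = 3" by (meson obtain_subset_with_card_n)
  then obtain x y z where "{x, y, z} \<subseteq> S \<inter> set p" "x \<noteq> y" "x \<noteq> z" "y \<noteq> z"
    by (auto simp: card_3_iff)
  then show False using assms unfolding general_position_def by blast
qed

lemma obtain_four_increasing:
  fixes I :: "'a::linorder set"
  assumes "finite I" "4 \<le> card I"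
  obtains a b c d where "a < b" "b < c" "c < d" "a \<in> I" "b \<in> I" "c \<in> I" "d \<in> I"
proof -
  let ?l = "sorted_list_of_set I"
  have l: "sorted_wrt (<) ?l" "set ?l = I" "4 \<le> length ?l" using assms by auto
  then have "?l ! 0 < ?l ! 1" "?l ! 1 < ?l ! 2" "?l ! 2 < ?l ! 3"
    using sorted_wrt_nth_less[OF l(1)] by simp_all
  moreover have "?l ! k \<in> I" if "k < 4" for k using l that nth_mem[of k ?l] by simp
  ultimately show thesis using that by simp
qed

lemma card_inter_isometric_cycle_le:
  assumes cg: "connected_graph V E" and gp: "general_position V E S" and ic: "isometric_cycle V E c"
  shows "card (S \<inter> set c) \<le> 3"
proof (rule ccontr)
  let ?n = "length c"
  define I where "I = {i. i < ?n \<and> c ! i \<in> S}"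
  have dc: "distinct c" using ic by (simp add: isometric_cycle_def)
  assume "\<not> ?thesis"
  moreover have "S \<inter> set c = (\<lambda>i. c ! i) ` I" unfolding I_def by (auto simp: in_set_conv_nth)
  moreover have fin: "finite I" unfolding I_def by simp
  ultimately have "4 \<le> card I" using card_image_le[of I "\<lambda>i. c ! i"] by simp
  then obtain i1 i2 i3 i4 where ord: "i1 < i2" "i2 < i3" "i3 < i4"
    and inI: "i1 \<in> I" "i2 \<in> I" "i3 \<in> I" "i4 \<in> I"
    by (rule obtain_four_increasing[OF fin])
  then have lt: "i4 < ?n" by (simp add: I_def)
  have no_geodesic: "\<not> (\<exists>P. isometric_path V E P \<and> {c ! x, c ! y, c ! z} \<subseteq> set P)"
    if "x \<in> I" "y \<in> I" "z \<in> I" "x < y" "y < z" for x y z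
  proof -
    have "c ! x \<noteq> c ! y" "c ! x \<noteq> c ! z" "c ! y \<noteq> c ! z"
      using that nth_eq_iff_index_eq[OF dc] by (auto simp: I_def)
    then show ?thesis using gp that unfolding general_position_def I_def by auto
  qed
  show False
  proof (cases "2 * (i3 - i1) \<le> ?n")
    case True
    have "(i1 + (i2 - i1)) mod ?n = i2" "(i1 + (i2 - i1) + (i3 - i2)) mod ?n = i3"
      and "2 * ((i2 - i1) + (i3 - i2)) \<le> ?n"
      using ord lt True by simp_all
    then show False
      using isometric_cycle_short_arc[OF cg ic, of i1 "i2 - i1" "i3 - i2"] no_geodesic[OF inI(1-3)]
        ord lt by simp
  next
    case False
    \<comment> \<open>then the arc from the third vertex via the fourth back to the first is short\<close>
    have "(i3 + (i4 - i3)) mod ?n = i4" "(i3 + (i4 - i3) + (?n - i4 + i1)) mod ?n = i1"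
      and "2 * ((i4 - i3) + (?n - i4 + i1)) \<le> ?n"
      using ord lt False by simp_all
    then show False
      using isometric_cycle_short_arc[OF cg ic, of i3 "i4 - i3" "?n - i4 + i1"]
        no_geodesic[OF inI(1,3,4)] ord lt by (simp add: insert_commute)
  qed
qed

lemma minimum_cover_exists:
  assumes "finite V" "\<forall>p\<in>P. Q p \<and> distinct p" "(\<Union>p\<in>P. set p) = V"
  obtains P where "finite P"
    "card P = (LEAST k. \<exists>P. finite P \<and> card P = k \<and> (\<forall>p\<in>P. Q p) \<and> (\<Union>p\<in>P. set p) = V)"
    "\<forall>p\<in>P. Q p" "(\<Union>p\<in>P. set p) = V"
proof -
  have "P \<subseteq> {xs. set xs \<subseteq> V \<and> distinct xs}" using assms(2,3) by blast
  then have "finite P" using finite_subset_distinct[OF assms(1)] finite_subset by blast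
  then have "\<exists>k P. finite P \<and> card P = k \<and> (\<forall>p\<in>P. Q p) \<and> (\<Union>p\<in>P. set p) = V"
    using assms(2,3) by blast
  then have "\<exists>P. finite P \<and>
    card P = (LEAST k. \<exists>P. finite P \<and> card P = k \<and> (\<forall>p\<in>P. Q p) \<and> (\<Union>p\<in>P. set p) = V) \<and>
    (\<forall>p\<in>P. Q p) \<and> (\<Union>p\<in>P. set p) = V"
    by (rule LeastI_ex)
  then show thesis using that by blast
qed

lemma gp_le_mult_card_cover:
  assumes "finite V" "finite P" "(\<Union>p\<in>P. set p) = V"
    and bound: "\<And>S p. general_position V E S \<Longrightarrow> p \<in> P \<Longrightarrow> card (S \<inter> set p) \<le> k"
  shows "gp V E \<le> k * card P"
proof -
  have "card ` {S. general_position V E S} \<subseteq> card ` Pow V" unfolding general_position_def by blast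
  then have "finite (card ` {S. general_position V E S})"
    using assms(1) by (meson finite_Pow_iff finite_imageI finite_subset)
  moreover have "general_position V E {}" unfolding general_position_def by simp
  then have "card ` {S. general_position V E S} \<noteq> {}" by blast
  ultimately have "gp V E \<in> card ` {S. general_position V E S}" unfolding gp_def by (rule Max_in)
  then obtain S where S: "general_position V E S" "gp V E = card S" by blast
  then have "S = (\<Union>p\<in>P. S \<inter> set p)" using assms(3) unfolding general_position_def by blast
  then have "card S \<le> (\<Sum>p\<in>P. card (S \<inter> set p))" using card_UN_le[OF assms(2)] by metis
  also have "\<dots> \<le> k * card P" using sum_bounded_above[of P _ k] bound[OF S(1)] by (simp add: mult.commute)
  finally show ?thesis using S(2) by simp
qed

theorem corollary3p2:
  fixes V :: "'a set" and E :: "'a \<Rightarrow> 'a \<Rightarrow> bool"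
  assumes "connected_graph V E"
  shows "gp V E \<le> 2 * ip V E \<and>
         ((\<exists>C. (\<forall>c\<in>C. isometric_cycle V E c) \<and> (\<Union>c\<in>C. set c) = V)
           \<longrightarrow> gp V E \<le> 3 * ic V E)"
proof (intro conjI impI)
  have fin: "finite V" using assms by (simp add: connected_graph_def simple_graph_def)
  have singletons: "\<forall>p\<in>(\<lambda>v. [v]) ` V. isometric_path V E p \<and> distinct p"
    using singleton_isometric_path by auto
  have cover: "(\<Union>p\<in>(\<lambda>v. [v]) ` V. set p) = V" by auto
  obtain P where P: "finite P" "card P = ip V E" "\<forall>p\<in>P. isometric_path V E p" "(\<Union>p\<in>P. set p) = V"
    by (rule minimum_cover_exists[OF fin singletons cover, folded ip_def])
  have "card (S \<inter> set p) \<le> 2" if "general_position V E S" "p \<in> P" for S p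
    using card_inter_isometric_path_le that P(3) by blast
  then show "gp V E \<le> 2 * ip V E" using gp_le_mult_card_cover[OF fin P(1,4)] P(2) by simp
  assume "\<exists>C. (\<forall>c\<in>C. isometric_cycle V E c) \<and> (\<Union>c\<in>C. set c) = V"
  then obtain C where "\<forall>c\<in>C. isometric_cycle V E c" and cover: "(\<Union>c\<in>C. set c) = V" by blast
  then have cycles: "\<forall>c\<in>C. isometric_cycle V E c \<and> distinct c" by (simp add: isometric_cycle_def)
  obtain D where D: "finite D" "card D = ic V E" "\<forall>c\<in>D. isometric_cycle V E c" "(\<Union>c\<in>D. set c) = V"
    by (rule minimum_cover_exists[OF fin cycles cover, folded ic_def])
  have "card (S \<inter> set c) \<le> 3" if "general_position V E S" "c \<in> D" for S c
    using card_inter_isometric_cycle_le[OF assms] that D(3) by blast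
  then show "gp V E \<le> 3 * ic V E" using gp_le_mult_card_cover[OF fin D(1,4)] D(2) by simp
qed

end
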